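(* The region $$\mathcal{M}=\left\{(S,I)\in(\mathbb{R}_0^+)^2:\ 0\le S\le A,\ 0\le S+I\le\frac{A(\sigma+g+A)}{\sigma+g}\right\}$$ is positively flow-invariant for the impulsive system $$\dot S=S(A-S)-\beta_0 IS,\quad \dot I=\beta_0 IS-(\sigma+g)I\ (t\neq nT),\quad S(nT)=(1-p)S(nT^-),\ I(nT)=I(nT^-),\ n\in\mathbb{N}.$$
   Context: Parameters: $A\in(0,1]$, $\beta_0\ge0$, $\sigma,g\ge0$ with $\sigma+g>0$, $p\in[0,1]$, $T>0$; it is assumed that $S(t)\le A$ for all $t\ge0$. A set $\mathcal{K}$ is positively flow-invariant if every solution starting in $\mathcal{K}$ stays in $\mathcal{K}$ for all $t\ge0$. *)

theory Defs
  imports "HOL-Analysis.Analysis"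
begin

definition region_M :: "real \<Rightarrow> real \<Rightarrow> real \<Rightarrow> (real \<times> real) set" where
  "region_M A \<sigma> g = {(S, I). S \<ge> 0 \<and> I \<ge> 0 \<and> S \<le> A \<and> 0 \<le> S + I \<and>
                         S + I \<le> A * (\<sigma> + g + A) / (\<sigma> + g)}"

text \<open>A solution of the impulsive system on [0, infinity): on every interval
  [nT, (n+1)T) the ODE holds (right derivative at the impulse times, hence
  right-continuity there); at every impulse time nT with n >= 1 the left limits
  exist, S jumps by the factor (1-p) and I is continuous.\<close>
definition impulsive_solution ::
  "real \<Rightarrow> real \<Rightarrow> real \<Rightarrow> real \<Rightarrow> real \<Rightarrow> real \<Rightarrow> (real \<Rightarrow> real) \<Rightarrow> (real \<Rightarrow> real) \<Rightarrow> bool" where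
  "impulsive_solution A \<beta>0 \<sigma> g p T S I \<longleftrightarrow>
     (\<forall>n::nat. \<forall>t \<in> {real n * T ..< real (Suc n) * T}.
        (S has_real_derivative (S t * (A - S t) - \<beta>0 * I t * S t))
           (at t within {real n * T ..< real (Suc n) * T}) \<and>
        (I has_real_derivative (\<beta>0 * I t * S t - (\<sigma> + g) * I t))
           (at t within {real n * T ..< real (Suc n) * T})) \<and>
     (\<forall>n::nat. n \<ge> 1 \<longrightarrow>
        (\<exists>L. (S \<longlongrightarrow> L) (at_left (real n * T)) \<and> S (real n * T) = (1 - p) * L) \<and>
        (I \<longlongrightarrow> I (real n * T)) (at_left (real n * T)))"

definition positively_flow_invariant ::
  "real \<Rightarrow> real \<Rightarrow> real \<Rightarrow> real \<Rightarrow> real \<Rightarrow> real \<Rightarrow> (real \<times> real) set \<Rightarrow> bool" where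
  "positively_flow_invariant A \<beta>0 \<sigma> g p T K \<longleftrightarrow>
     (\<forall>S I. impulsive_solution A \<beta>0 \<sigma> g p T S I \<and> (\<forall>t\<ge>0. S t \<le> A) \<and> (S 0, I 0) \<in> K
        \<longrightarrow> (\<forall>t\<ge>0. (S t, I t) \<in> K))"

end

theory Submission
  imports Defs
begin

text \<open>Between two impulse times S and I satisfy the linear equations
  S' = S (A - S - \<beta>0 I) and I' = I (\<beta>0 S - c) with c = \<sigma> + g, so neither can change sign.
  The total population N = S + I satisfies N' = S (A - S) - c I = S (c + A - S) - c N,
  and 0 \<le> S \<le> A gives N' \<le> A (c + A) - c N, so N cannot cross the level A (c + A) / c
  upwards. The region is closed, so it contains the left limits at an impulse time, and
  the impulse only shrinks S.\<close>

lemma nonpos_barrier: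
  fixes f f' :: "real \<Rightarrow> real"
  assumes "a \<le> b" and cont: "continuous_on {a..b} f"
    and deriv: "\<And>x. a < x \<Longrightarrow> x < b \<Longrightarrow> (f has_real_derivative f' x) (at x)"
    and "f a \<le> 0"
    and deriv_nonpos: "\<And>x. a < x \<Longrightarrow> x < b \<Longrightarrow> f x > 0 \<Longrightarrow> f' x \<le> 0"
  shows "f b \<le> 0"
proof (rule ccontr)
  assume fb: "\<not> f b \<le> 0"
  define Z where "Z = {a..b} \<inter> f -` {..0}"
  have "closed Z" unfolding Z_def
    by (rule continuous_closed_preimage[OF cont]) auto
  moreover have "Z \<noteq> {}" using assms unfolding Z_def by auto
  moreover have bdd: "bdd_above Z" unfolding Z_def by (rule bdd_aboveI[of _ b]) auto
  ultimately have "Sup Z \<in> Z" by (rule closed_contains_Sup[rotated -1])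
  define t0 where "t0 = Sup Z"
  have t0: "a \<le> t0" "t0 \<le> b" "f t0 \<le> 0"
    using \<open>Sup Z \<in> Z\<close> unfolding t0_def Z_def by auto
  with fb have "t0 < b" by (cases "t0 = b") auto
  have pos_after_t0: "f x > 0" if "t0 < x" "x \<le> b" for x
  proof (rule ccontr)
    assume "\<not> f x > 0"
    with that t0 have "x \<in> Z" unfolding Z_def by auto
    with bdd have "x \<le> t0" unfolding t0_def by (simp add: cSup_upper)
    with that show False by simp
  qed
  have "continuous_on {t0..b} f" using t0 by (intro continuous_on_subset[OF cont]) auto
  moreover have "f differentiable (at x)" if "t0 < x" "x < b" for x
    using deriv that t0 by (meson dual_order.strict_trans2 real_differentiable_def)
  ultimately obtain l z where z: "t0 < z" "z < b" "DERIV f z :> l" "f b - f t0 = (b - t0) * l"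
    using MVT[OF \<open>t0 < b\<close>] by blast
  have "l = f' z" using DERIV_unique[OF z(3) deriv] z t0 by simp
  with deriv_nonpos[of z] pos_after_t0[of z] z t0 have "l \<le> 0" by simp
  with \<open>t0 < b\<close> have "(b - t0) * l \<le> 0" by (simp add: mult_nonneg_nonpos)
  with z(4) t0 fb show False by simp
qed

lemma nonneg_of_linear_derivative:
  fixes f h :: "real \<Rightarrow> real"
  assumes "a \<le> b" and cont_f: "continuous_on {a..b} f" and cont_h: "continuous_on {a..b} h"
    and deriv: "\<And>x. a < x \<Longrightarrow> x < b \<Longrightarrow> (f has_real_derivative f x * h x) (at x)"
    and "f a \<ge> 0"
  shows "f b \<ge> 0"
proof -
  have "bounded (h ` {a..b})"
    by (intro compact_imp_bounded compact_continuous_image[OF cont_h compact_Icc])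
  then obtain K where K: "\<And>x. x \<in> {a..b} \<Longrightarrow> \<bar>h x\<bar> \<le> K"
    unfolding bounded_real by (metis image_eqI)
  \<comment> \<open>with K \<ge> h the damped function u can only decrease while f < 0\<close>
  define u where "u t = - (f t * exp (- K * t))" for t
  define u' where "u' t = - (f t * (h t - K) * exp (- K * t))" for t
  have "u b \<le> 0"
  proof (rule nonpos_barrier[OF \<open>a \<le> b\<close>, of u u'])
    show "continuous_on {a..b} u" unfolding u_def by (intro continuous_intros cont_f)
    show "u a \<le> 0" using \<open>f a \<ge> 0\<close> unfolding u_def by simp
    fix x assume x: "a < x" "x < b"
    show "(u has_real_derivative u' x) (at x)"
      unfolding u_def u'_def
      by (rule derivative_eq_intros deriv x refl | simp add: algebra_simps)+
    assume "u x > 0"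
    then have "f x < 0" unfolding u_def by (simp add: mult_less_0_iff)
    moreover have "h x - K \<le> 0" using K[of x] x by auto
    ultimately show "u' x \<le> 0" unfolding u'_def by (simp add: mult_nonpos_nonpos)
  qed
  then show ?thesis unfolding u_def by (simp add: zero_le_mult_iff)
qed

lemma region_M_invariant_on_interval:
  fixes S I :: "real \<Rightarrow> real"
  assumes c_pos: "\<sigma> + g > 0"
    and dS: "\<And>t. t \<in> {a..<b} \<Longrightarrow>
      (S has_real_derivative (S t * (A - S t) - \<beta>0 * I t * S t)) (at t within {a..<b})"
    and dI: "\<And>t. t \<in> {a..<b} \<Longrightarrow>
      (I has_real_derivative (\<beta>0 * I t * S t - (\<sigma> + g) * I t)) (at t within {a..<b})"
    and S_le_A: "\<And>t. t \<in> {a..<b} \<Longrightarrow> S t \<le> A"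
    and init: "(S a, I a) \<in> region_M A \<sigma> g"
    and t: "t \<in> {a..<b}"
  shows "(S t, I t) \<in> region_M A \<sigma> g"
proof -
  define c where "c = \<sigma> + g"
  define B where "B = A * (c + A) / c"
  have c: "c > 0" using c_pos unfolding c_def .
  have region: "region_M A \<sigma> g = {(S, I). 0 \<le> S \<and> 0 \<le> I \<and> S \<le> A \<and> S + I \<le> B}"
    unfolding region_M_def B_def c_def by (auto simp: algebra_simps)
  from init have S0: "S a \<ge> 0" and I0: "I a \<ge> 0" and N0: "S a + I a \<le> B"
    unfolding region by auto
  have "continuous_on {a..<b} S" "continuous_on {a..<b} I"
    using dS dI by (meson DERIV_continuous continuous_on_eq_continuous_within)+
  then have cont: "continuous_on {a..s} S" "continuous_on {a..s} I" if "s \<in> {a..<b}" for s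
    using that by (auto intro: continuous_on_subset)
  have dS': "(S has_real_derivative (S x * (A - S x) - \<beta>0 * I x * S x)) (at x)"
   and dI': "(I has_real_derivative (\<beta>0 * I x * S x - c * I x)) (at x)"
    if "a < x" "x < b" for x
  proof -
    have "at x within {a..<b} = at x"
      by (rule at_within_interior) (use that in simp)
    then show "(S has_real_derivative (S x * (A - S x) - \<beta>0 * I x * S x)) (at x)"
      "(I has_real_derivative (\<beta>0 * I x * S x - c * I x)) (at x)"
      using dS[of x] dI[of x] that unfolding c_def by auto
  qed
  have S_nonneg: "S s \<ge> 0" if s: "s \<in> {a..<b}" for s
  proof (rule nonneg_of_linear_derivative[of a s S "\<lambda>x. A - S x - \<beta>0 * I x"])
    show "continuous_on {a..s} (\<lambda>x. A - S x - \<beta>0 * I x)"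
      by (intro continuous_intros cont[OF s])
    fix x assume "a < x" "x < s"
    with s dS'[of x] show "(S has_real_derivative S x * (A - S x - \<beta>0 * I x)) (at x)"
      by (auto elim: DERIV_cong simp: algebra_simps)
  qed (use s S0 cont in auto)
  have I_nonneg: "I s \<ge> 0" if s: "s \<in> {a..<b}" for s
  proof (rule nonneg_of_linear_derivative[of a s I "\<lambda>x. \<beta>0 * S x - c"])
    show "continuous_on {a..s} (\<lambda>x. \<beta>0 * S x - c)"
      by (intro continuous_intros cont[OF s])
    fix x assume "a < x" "x < s"
    with s dI'[of x] show "(I has_real_derivative I x * (\<beta>0 * S x - c)) (at x)"
      by (auto elim: DERIV_cong simp: algebra_simps)
  qed (use s I0 cont in auto)
  have "S t + I t - B \<le> 0"
  proof (rule nonpos_barrier[of a t "\<lambda>x. S x + I x - B" "\<lambda>x. S x * (A - S x) - c * I x"])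
    show "continuous_on {a..t} (\<lambda>x. S x + I x - B)"
      by (intro continuous_intros cont[OF t])
    fix x assume "a < x" "x < t"
    with t have x: "a < x" "x < b" by auto
    show "((\<lambda>x. S x + I x - B) has_real_derivative S x * (A - S x) - c * I x) (at x)"
      using dS'[OF x] dI'[OF x] by (auto intro!: derivative_eq_intros)
    assume above: "S x + I x - B > 0"
    have "S x * (c + A - S x) \<le> A * (c + A)"
      using S_nonneg[of x] S_le_A[of x] x c by (intro mult_mono) auto
    also have "\<dots> = c * B" using c unfolding B_def by simp
    finally have "S x * (A - S x) - c * I x \<le> c * (B - (S x + I x))"
      by (simp add: algebra_simps)
    also have "\<dots> \<le> 0" using above c by (simp add: mult_nonneg_nonpos)
    finally show "S x * (A - S x) - c * I x \<le> 0" .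
  qed (use t N0 in auto)
  with S_nonneg[OF t] I_nonneg[OF t] S_le_A[OF t] show ?thesis
    unfolding region by simp
qed

lemma closed_region_M: "closed (region_M A \<sigma> g)"
proof -
  have "region_M A \<sigma> g = {z. 0 \<le> fst z} \<inter> {z. 0 \<le> snd z} \<inter> {z. fst z \<le> A} \<inter>
      {z. 0 \<le> fst z + snd z} \<inter> {z. fst z + snd z \<le> A * (\<sigma> + g + A) / (\<sigma> + g)}"
    unfolding region_M_def by auto
  then show ?thesis
    by (simp only:) (intro closed_Int closed_Collect_le continuous_intros)
qed

lemma region_M_shrink_S:
  assumes "(S, I) \<in> region_M A \<sigma> g" "0 \<le> q" "q \<le> 1"
  shows "(q * S, I) \<in> region_M A \<sigma> g"
proof -
  have "q * S \<le> S" using assms mult_left_le_one_le[of S q] unfolding region_M_def by simp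
  with assms show ?thesis unfolding region_M_def by auto
qed

lemma region_M_at_impulse:
  fixes S I :: "real \<Rightarrow> real"
  assumes "a < x" and before: "\<And>t. t \<in> {a..<x} \<Longrightarrow> (S t, I t) \<in> region_M A \<sigma> g"
    and S_lim: "(S \<longlongrightarrow> L) (at_left x)" and I_lim: "(I \<longlongrightarrow> I x) (at_left x)"
    and jump: "S x = (1 - p) * L" and "0 \<le> p" "p \<le> 1"
  shows "(S x, I x) \<in> region_M A \<sigma> g"
proof -
  have "eventually (\<lambda>t. (S t, I t) \<in> region_M A \<sigma> g) (at_left x)"
    using eventually_at_left_real[OF \<open>a < x\<close>] by eventually_elim (use before in auto)
  with tendsto_Pair[OF S_lim I_lim] closed_region_M have "(L, I x) \<in> region_M A \<sigma> g"
    by (rule Lim_in_closed_set[rotated -1]) simp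
  then show ?thesis
    unfolding jump using assms by (intro region_M_shrink_S) auto
qed

lemma Ico_period_cover:
  fixes t T :: real
  assumes "0 \<le> t" "0 < T"
  obtains n :: nat where "t \<in> {real n * T ..< real (Suc n) * T}"
proof
  have "real (nat \<lfloor>t / T\<rfloor>) = of_int \<lfloor>t / T\<rfloor>" using assms by simp
  with floor_divide_lower[OF \<open>0 < T\<close>, of t] floor_divide_upper[OF \<open>0 < T\<close>, of t]
  show "t \<in> {real (nat \<lfloor>t / T\<rfloor>) * T ..< real (Suc (nat \<lfloor>t / T\<rfloor>)) * T}"
    by (simp add: algebra_simps)
qed

lemma impulsive_solution_in_region_M_on_period:
  fixes S I :: "real \<Rightarrow> real"
  assumes sol: "impulsive_solution A \<beta>0 \<sigma> g p T S I"
    and "\<sigma> + g > 0" "0 \<le> p" "p \<le> 1" "T > 0"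
    and S_le_A: "\<And>t. t \<ge> 0 \<Longrightarrow> S t \<le> A" and init: "(S 0, I 0) \<in> region_M A \<sigma> g"
    and t: "t \<in> {real n * T ..< real (Suc n) * T}"
  shows "(S t, I t) \<in> region_M A \<sigma> g"
proof -
  from sol have flow: "\<And>n. \<forall>t \<in> {real n * T ..< real (Suc n) * T}.
        (S has_real_derivative (S t * (A - S t) - \<beta>0 * I t * S t)) (at t within {real n * T ..< real (Suc n) * T}) \<and>
        (I has_real_derivative (\<beta>0 * I t * S t - (\<sigma> + g) * I t)) (at t within {real n * T ..< real (Suc n) * T})"
    and impulse: "\<And>n. n \<ge> 1 \<Longrightarrow>
        (\<exists>L. (S \<longlongrightarrow> L) (at_left (real n * T)) \<and> S (real n * T) = (1 - p) * L) \<and>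
        (I \<longlongrightarrow> I (real n * T)) (at_left (real n * T))"
    unfolding impulsive_solution_def by simp_all
  have on_period: "(S t, I t) \<in> region_M A \<sigma> g"
    if "(S (real n * T), I (real n * T)) \<in> region_M A \<sigma> g" "t \<in> {real n * T ..< real (Suc n) * T}" for n t
  proof (rule region_M_invariant_on_interval[where S = S and I = I, OF \<open>\<sigma> + g > 0\<close> _ _ _ that])
    fix s assume s: "s \<in> {real n * T ..< real (Suc n) * T}"
    with flow[of n] show
      "(S has_real_derivative (S s * (A - S s) - \<beta>0 * I s * S s)) (at s within {real n * T ..< real (Suc n) * T})"
      "(I has_real_derivative (\<beta>0 * I s * S s - (\<sigma> + g) * I s)) (at s within {real n * T ..< real (Suc n) * T})"
      by auto
    have "0 \<le> s" using s \<open>T > 0\<close> by (auto intro: order_trans[rotated])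
    then show "S s \<le> A" by (rule S_le_A)
  qed
  from t show ?thesis
  proof (induction n arbitrary: t)
    case 0
    then show ?case using on_period[of 0] init by simp
  next
    case (Suc n)
    let ?x = "real (Suc n) * T"
    from impulse[of "Suc n"] obtain L where S_lim: "(S \<longlongrightarrow> L) (at_left ?x)"
      and jump: "S ?x = (1 - p) * L" and I_lim: "(I \<longlongrightarrow> I ?x) (at_left ?x)"
      by auto
    have "real n * T < ?x" using \<open>T > 0\<close> by simp
    from region_M_at_impulse[OF this _ S_lim I_lim jump \<open>0 \<le> p\<close> \<open>p \<le> 1\<close>] Suc.IH
    have "(S ?x, I ?x) \<in> region_M A \<sigma> g" by blast
    from this Suc.prems show ?case by (rule on_period)
  qed
qed

theorem lemma1:
  fixes A \<beta>0 \<sigma> g p T :: real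
  assumes "0 < A" "A \<le> 1" "\<beta>0 \<ge> 0" "\<sigma> \<ge> 0" "g \<ge> 0" "\<sigma> + g > 0"
    "0 \<le> p" "p \<le> 1" "T > 0"
  shows "positively_flow_invariant A \<beta>0 \<sigma> g p T (region_M A \<sigma> g)"
  unfolding positively_flow_invariant_def
proof (intro allI impI)
  fix S I :: "real \<Rightarrow> real" and t :: real
  assume "impulsive_solution A \<beta>0 \<sigma> g p T S I \<and> (\<forall>t\<ge>0. S t \<le> A) \<and> (S 0, I 0) \<in> region_M A \<sigma> g"
  then have sol: "impulsive_solution A \<beta>0 \<sigma> g p T S I"
    and S_le_A: "\<And>t. t \<ge> 0 \<Longrightarrow> S t \<le> A" and init: "(S 0, I 0) \<in> region_M A \<sigma> g"
    by auto
  assume "t \<ge> 0"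
  then obtain n where "t \<in> {real n * T ..< real (Suc n) * T}"
    using Ico_period_cover \<open>T > 0\<close> by blast
  with impulsive_solution_in_region_M_on_period[OF sol \<open>\<sigma> + g > 0\<close> \<open>0 \<le> p\<close> \<open>p \<le> 1\<close>
      \<open>T > 0\<close> S_le_A init]
  show "(S t, I t) \<in> region_M A \<sigma> g" by blast
qed

end
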